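(* Let $A\in\mathbb{R}^{m\times n}$ be semi-monotone (i.e. $A^{\dagger}\geq 0$). Let $A=M-N=U-V$ be two proper regular splittings of $A$ such that $R(M+U-A)=R(A)$ and $N(M+U-A)=N(A)$. Suppose all row sums of $U^{\dagger}$ and of $M^{\dagger}$ are positive. Then, with $H=U^{\dagger}VM^{\dagger}N$, $$\rho(H)\leq \min\{\rho(U^{\dagger}V),\rho(M^{\dagger}N)\}<1.$$
   Context: All matrices are real. $X^{\dagger}$ denotes the Moore–Penrose inverse of $X$, and $\rho(\cdot)$ the spectral radius. For a matrix $X$, $X\geq 0$ means that all entries of $X$ are nonnegative and at least one entry is positive; $X\geq Y$ means $X-Y\geq 0$. $R(X)$ and $N(X)$ denote range and null space. A splitting $A=U-V$ is proper if $R(U)=R(A)$ and $N(U)=N(A)$; it is a proper regular splitting if it is proper, $U^{\dagger}\geq 0$ and $V\geq 0$. *)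

theory Defs
  imports "Jordan_Normal_Form.Spectral_Radius"
begin

definition penrose :: "real mat \<Rightarrow> real mat \<Rightarrow> bool" where
  "penrose A X \<longleftrightarrow> X \<in> carrier_mat (dim_col A) (dim_row A) \<and>
     A * X * A = A \<and> X * A * X = X \<and>
     transpose_mat (A * X) = A * X \<and> transpose_mat (X * A) = X * A"

definition pinv :: "real mat \<Rightarrow> real mat" where
  "pinv A = (THE X. penrose A X)"

definition rho :: "real mat \<Rightarrow> real" where
  "rho X = spectral_radius (map_mat complex_of_real X)"

(* X \<ge> 0: all entries nonnegative and at least one entry positive *)
definition nonneg_mat :: "real mat \<Rightarrow> bool" where
  "nonneg_mat X \<longleftrightarrow> (\<forall>i<dim_row X. \<forall>j<dim_col X. X $$ (i,j) \<ge> 0) \<and>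
     (\<exists>i<dim_row X. \<exists>j<dim_col X. X $$ (i,j) > 0)"

definition range_mat :: "real mat \<Rightarrow> real vec set" where
  "range_mat X = {X *\<^sub>v y | y. y \<in> carrier_vec (dim_col X)}"

definition null_mat :: "real mat \<Rightarrow> real vec set" where
  "null_mat X = {x \<in> carrier_vec (dim_col X). X *\<^sub>v x = 0\<^sub>v (dim_row X)}"

definition semi_monotone :: "real mat \<Rightarrow> bool" where
  "semi_monotone A \<longleftrightarrow> nonneg_mat (pinv A)"

definition proper_splitting :: "real mat \<Rightarrow> real mat \<Rightarrow> real mat \<Rightarrow> bool" where
  "proper_splitting A U V \<longleftrightarrow>
     U \<in> carrier_mat (dim_row A) (dim_col A) \<and> V \<in> carrier_mat (dim_row A) (dim_col A) \<and>
     A = U - V \<and> range_mat U = range_mat A \<and> null_mat U = null_mat A"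

definition proper_regular_splitting :: "real mat \<Rightarrow> real mat \<Rightarrow> real mat \<Rightarrow> bool" where
  "proper_regular_splitting A U V \<longleftrightarrow>
     proper_splitting A U V \<and> nonneg_mat (pinv U) \<and> nonneg_mat V"

definition pos_row_sums :: "real mat \<Rightarrow> bool" where
  "pos_row_sums X \<longleftrightarrow> (\<forall>i<dim_row X. (\<Sum>j<dim_col X. X $$ (i,j)) > 0)"

end

theory Submission
  imports Defs
begin

text \<open>
  Write \<open>a = A\<^sup>\<dagger>\<close>, \<open>g = M\<^sup>\<dagger>\<close>, \<open>u = U\<^sup>\<dagger>\<close>. For a proper splitting the orthogonal projectors agree,
  \<open>U u = A a\<close> and \<open>u U = a A\<close>, so any two proper splittings satisfy
  \<open>g N u = u - g + g V u\<close>. Applied to the trivial splitting \<open>A = A - 0\<close> this gives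
  \<open>a V u = a - u\<close>, i.e. \<open>G = T + G T\<close> for the nonnegative matrices \<open>G = a V\<close>, \<open>T = u V\<close>;
  a vector \<open>w \<ge> 0\<close> with \<open>w \<le> T w\<close> would then satisfy \<open>T w \<le> 0\<close>, hence \<open>\<rho>(T) < 1\<close>.

  For \<open>\<rho>(u V) < s < 1\<close>, a truncated Neumann series \<open>h\<close> of \<open>V u / s\<close> yields a positive
  vector \<open>x = u h\<close> with \<open>u V x \<le> s x\<close> and \<open>g N x = x - g h + g V u h \<le> x\<close>; the positive
  row sums of \<open>u\<close> and \<open>g\<close> absorb the truncation error. Then \<open>H x \<le> s x\<close>, so \<open>\<rho>(H) \<le> s\<close>.
  Exchanging the two splittings and using \<open>\<rho>(X Y) = \<rho>(Y X)\<close> gives \<open>\<rho>(H) \<le> \<rho>(g N)\<close>.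
\<close>

lemma mult_assoc_dims:
  "dim_col A = dim_row B \<Longrightarrow> dim_col B = dim_row C \<Longrightarrow> A * B * C = A * (B * (C :: 'a :: semiring_0 mat))"
  by (rule assoc_mult_mat[of A "dim_row A" "dim_col A" B "dim_col B" C "dim_col C"]) auto

lemma transpose_mult_dims:
  "dim_col A = dim_row B \<Longrightarrow> (A * B)\<^sup>T = B\<^sup>T * (A :: 'a :: comm_semiring_0 mat)\<^sup>T"
  by (rule transpose_mult[of A "dim_row A" "dim_col A" B "dim_col B"]) auto

lemma eq_of_minus_mat_eq_zero:
  fixes X Y :: "'a :: ab_group_add mat"
  assumes "X \<in> carrier_mat m n" "Y \<in> carrier_mat m n" "X - Y = 0\<^sub>m m n"
  shows "X = Y"
proof (rule eq_matI)
  fix i j assume ij: "i < dim_row Y" "j < dim_col Y"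
  then have "X $$ (i,j) - Y $$ (i,j) = (X - Y) $$ (i,j)" by simp
  also have "\<dots> = 0" using assms ij by simp
  finally show "X $$ (i,j) = Y $$ (i,j)" by simp
qed (use assms in auto)

section \<open>The Moore-Penrose inverse\<close>

lemma pivot_select_mat_generalized_inverse:
  fixes C :: "'a::field mat"
  assumes C: "C \<in> carrier_mat nr nc" and pf: "pivot_fun C f nc"
  defines "G \<equiv> mat nc nr (\<lambda>(j,i). if f i = j then 1 else 0)"
  shows "G \<in> carrier_mat nc nr" "C * G * C = C"
proof -
  have dC: "dim_row C = nr" using C by auto
  note pd = pivot_funD[OF dC pf]
  show Gc: "G \<in> carrier_mat nc nr" unfolding G_def by auto
  have CG: "C * G = mat nr nr (\<lambda>(i,i'). if i = i' \<and> f i < nc then 1 else 0)"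
  proof (rule eq_matI)
    fix i i' assume "i < dim_row (mat nr nr (\<lambda>(i,i'). if i = i' \<and> f i < nc then 1 else (0::'a)))"
      and "i' < dim_col (mat nr nr (\<lambda>(i,i'). if i = i' \<and> f i < nc then 1 else (0::'a)))"
    hence i: "i < nr" and i': "i' < nr" by auto
    have "(C * G) $$ (i,i') = (\<Sum>j\<in>{0..<nc}. C $$ (i,j) * (if f i' = j then 1 else 0))"
      using i i' C Gc unfolding G_def by (auto simp: scalar_prod_def)
    also have "\<dots> = (\<Sum>j\<in>{0..<nc}. if f i' = j then C $$ (i,j) else 0)"
      by (rule sum.cong) auto
    also have "\<dots> = (if f i' < nc then C $$ (i, f i') else 0)"
      by (simp add: sum.delta')
    also have "\<dots> = (if i = i' \<and> f i < nc then 1 else 0)"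
      using pd(4)[OF i'] pd(5)[OF i'] i i' by auto
    finally show "(C * G) $$ (i,i') = mat nr nr (\<lambda>(i,i'). if i = i' \<and> f i < nc then 1 else 0) $$ (i,i')"
      using i i' by auto
  qed (use C Gc in auto)
  show "C * G * C = C"
  proof (rule eq_matI)
    fix i k assume "i < dim_row C" "k < dim_col C"
    hence i: "i < nr" and k: "k < nc" using C by auto
    have "(C * G * C) $$ (i,k) = (\<Sum>i'\<in>{0..<nr}. (if i = i' \<and> f i < nc then 1 else 0) * C $$ (i',k))"
      unfolding CG using i k C by (auto simp: scalar_prod_def)
    also have "\<dots> = (\<Sum>i'\<in>{0..<nr}. if i = i' then (if f i < nc then C $$ (i',k) else 0) else 0)"
      by (rule sum.cong) auto
    also have "\<dots> = (if f i < nc then C $$ (i,k) else 0)"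
      using i by (simp add: sum.delta')
    also have "\<dots> = C $$ (i,k)"
      using pd(1)[OF i] pd(2)[OF i, of k] k by (cases "f i < nc", auto)
    finally show "(C * G * C) $$ (i,k) = C $$ (i,k)" .
  qed (use C Gc in auto)
qed

lemma exists_generalized_inverse:
  fixes A :: "'a::field mat"
  assumes A: "A \<in> carrier_mat nr nc"
  shows "\<exists>G \<in> carrier_mat nc nr. A * G * A = A"
proof -
  obtain C where C: "gauss_jordan_single A = C" by auto
  note gj = gauss_jordan_single[OF A C]
  from gj(2) have Cc: "C \<in> carrier_mat nr nc" .
  from gj(3) obtain f where "pivot_fun C f nc"
    unfolding row_echelon_form_def using Cc by auto
  then obtain G0 where G0c: "G0 \<in> carrier_mat nc nr" and CGC: "C * G0 * C = C"
    using pivot_select_mat_generalized_inverse[OF Cc] by blast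
  from gj(4) obtain P Q where PQ: "C = P * A" "P \<in> carrier_mat nr nr" "Q \<in> carrier_mat nr nr"
    "Q * P = 1\<^sub>m nr" by blast
  have QC: "Q * C = A" using PQ A by (simp add: assoc_mult_mat[symmetric, of Q nr nr P nr A nc])
  show ?thesis
  proof (intro bexI[of _ "G0 * P"])
    show "G0 * P \<in> carrier_mat nc nr" using G0c PQ by auto
    have "A * (G0 * P) * A = Q * C * (G0 * P) * A" by (simp only: QC)
    also have "\<dots> = Q * (C * G0 * (P * A))"
      using A G0c PQ(2,3) Cc by (simp add: mult_assoc_dims)
    also have "\<dots> = A" unfolding PQ(1)[symmetric] CGC QC ..
    finally show "A * (G0 * P) * A = A" .
  qed
qed

lemma transpose_mult_self_eq_zero:
  fixes Y :: "real mat"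
  assumes Y: "Y \<in> carrier_mat m n" and Z: "Y\<^sup>T * Y = 0\<^sub>m n n"
  shows "Y = 0\<^sub>m m n"
proof (rule eq_matI)
  fix i j assume "i < dim_row (0\<^sub>m m n :: real mat)" "j < dim_col (0\<^sub>m m n :: real mat)"
  hence i: "i < m" and j: "j < n" by auto
  have "(\<Sum>k\<in>{0..<m}. Y $$ (k,j) * Y $$ (k,j)) = (Y\<^sup>T * Y) $$ (j,j)"
    using Y j by (auto simp: scalar_prod_def)
  also have "\<dots> = 0" using Z j by simp
  finally have "\<forall>k\<in>{0..<m}. Y $$ (k,j) * Y $$ (k,j) = 0"
    by (subst (asm) sum_nonneg_eq_0_iff) auto
  thus "Y $$ (i,j) = 0\<^sub>m m n $$ (i,j)" using i j by auto
qed (use Y in auto)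

lemma gram_cancel_left:
  fixes A X Y :: "real mat"
  assumes A: "A \<in> carrier_mat m n" and X: "X \<in> carrier_mat n k" and Y: "Y \<in> carrier_mat n k"
    and eq: "A\<^sup>T * A * X = A\<^sup>T * A * Y"
  shows "A * X = A * Y"
proof -
  define D where "D = A * (X - Y)"
  have Dc: "D \<in> carrier_mat m k" unfolding D_def using A X Y by auto
  have "A\<^sup>T * A * (X - Y) = A\<^sup>T * A * X - A\<^sup>T * A * Y"
    using A X Y by (intro mult_minus_distrib_mat) auto
  also have "\<dots> = 0\<^sub>m n k" unfolding eq using A Y by (intro minus_r_inv_mat) auto
  finally have gram_zero: "A\<^sup>T * A * (X - Y) = 0\<^sub>m n k" .
  have "D\<^sup>T * D = (X - Y)\<^sup>T * (A\<^sup>T * A * (X - Y))"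
    unfolding D_def using A X Y by (simp add: transpose_mult_dims mult_assoc_dims)
  also have "\<dots> = 0\<^sub>m k k" unfolding gram_zero using X Y by simp
  finally have "D = 0\<^sub>m m k" by (rule transpose_mult_self_eq_zero[OF Dc])
  have "A * X - A * Y = D"
    unfolding D_def using A X Y by (intro mult_minus_distrib_mat[symmetric]) auto
  also have "\<dots> = 0\<^sub>m m k" by fact
  finally show ?thesis by (rule eq_of_minus_mat_eq_zero[rotated 2]) (use A X Y in auto)
qed

text \<open>The witness is \<open>W A\<^sup>T\<close> for a generalized inverse \<open>W\<close> of the Gram matrix \<open>A\<^sup>T A\<close>.\<close>

lemma exists_inverse_13:
  fixes A :: "real mat"
  assumes A: "A \<in> carrier_mat m n"
  shows "\<exists>X \<in> carrier_mat n m. A * X * A = A \<and> (A * X)\<^sup>T = A * X"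
proof -
  have "A\<^sup>T * A \<in> carrier_mat n n" using A by auto
  then obtain W where W: "W \<in> carrier_mat n n" and SWS: "A\<^sup>T * A * W * (A\<^sup>T * A) = A\<^sup>T * A"
    using exists_generalized_inverse by blast
  have "A\<^sup>T * A * (W * A\<^sup>T * A) = A\<^sup>T * A * W * (A\<^sup>T * A)"
    using A W by (simp add: mult_assoc_dims)
  also have "\<dots> = A\<^sup>T * A * 1\<^sub>m n" unfolding SWS using A by simp
  finally have "A\<^sup>T * A * (W * A\<^sup>T * A) = A\<^sup>T * A * 1\<^sub>m n" .
  then have gram: "A * (W * A\<^sup>T * A) = A * 1\<^sub>m n"
    by (rule gram_cancel_left[OF A, rotated 2]) (use A W in auto)
  have "A * (W * A\<^sup>T) * A = A * (W * A\<^sup>T * A)"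
    using A W by (simp add: mult_assoc_dims)
  also have "\<dots> = A" unfolding gram using A by simp
  finally have AXA: "A * (W * A\<^sup>T) * A = A" .
  have "A\<^sup>T * (A * W\<^sup>T) * A\<^sup>T = (A * (W * A\<^sup>T) * A)\<^sup>T"
    using A W by (simp add: transpose_mult_dims mult_assoc_dims)
  also have "\<dots> = A\<^sup>T" by (simp only: AXA)
  finally have AtAW: "A\<^sup>T * (A * W\<^sup>T) * A\<^sup>T = A\<^sup>T" .
  have "(A * (W * A\<^sup>T))\<^sup>T = A * W\<^sup>T * A\<^sup>T"
    using A W by (simp add: transpose_mult_dims)
  also have "\<dots> = A * (W * A\<^sup>T) * A * W\<^sup>T * A\<^sup>T" by (simp only: AXA)
  also have "\<dots> = A * W * (A\<^sup>T * (A * W\<^sup>T) * A\<^sup>T)"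
    using A W by (simp add: mult_assoc_dims)
  also have "\<dots> = A * (W * A\<^sup>T)"
    unfolding AtAW using A W by (simp add: mult_assoc_dims)
  finally have sym: "(A * (W * A\<^sup>T))\<^sup>T = A * (W * A\<^sup>T)" .
  have "W * A\<^sup>T \<in> carrier_mat n m" using A W by auto
  then show ?thesis using AXA sym by (intro bexI[of _ "W * A\<^sup>T"] conjI)
qed

lemma exists_inverse_14:
  fixes A :: "real mat"
  assumes A: "A \<in> carrier_mat m n"
  shows "\<exists>Z \<in> carrier_mat n m. A * Z * A = A \<and> (Z * A)\<^sup>T = Z * A"
proof -
  obtain Y where Yc: "Y \<in> carrier_mat m n" and AYA: "A\<^sup>T * Y * A\<^sup>T = A\<^sup>T"
    and sY: "(A\<^sup>T * Y)\<^sup>T = A\<^sup>T * Y"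
    using exists_inverse_13[of "A\<^sup>T" n m] A by auto
  have "A * Y\<^sup>T * A = (A\<^sup>T * Y * A\<^sup>T)\<^sup>T"
    using A Yc by (simp add: transpose_mult_dims mult_assoc_dims)
  then have "A * Y\<^sup>T * A = A" unfolding AYA by simp
  moreover have "(Y\<^sup>T * A)\<^sup>T = Y\<^sup>T * A" using A Yc sY by (simp add: transpose_mult_dims)
  moreover have "Y\<^sup>T \<in> carrier_mat n m" using Yc by simp
  ultimately show ?thesis by blast
qed

lemma penrose_exists:
  fixes A :: "real mat"
  assumes A: "A \<in> carrier_mat m n"
  shows "\<exists>G. penrose A G"
proof -
  obtain X where Xc: "X \<in> carrier_mat n m" and AXA: "A * X * A = A" and sX: "(A * X)\<^sup>T = A * X"
    using exists_inverse_13[OF A] by auto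
  obtain Z where Zc: "Z \<in> carrier_mat n m" and AZA: "A * Z * A = A" and sZ: "(Z * A)\<^sup>T = Z * A"
    using exists_inverse_14[OF A] by auto
  have d: "dim_row A = m" "dim_col A = n" "dim_row X = n" "dim_col X = m" "dim_row Z = n" "dim_col Z = m"
    using A Xc Zc by auto
  \<comment> \<open>the product of a \{1,4\}-inverse, \<open>A\<close> and a \{1,3\}-inverse satisfies all four equations\<close>
  define G where "G = Z * A * X"
  have "G \<in> carrier_mat n m" unfolding G_def using d by auto
  moreover have "A * G * A = A"
  proof -
    have "A * G * A = (A * Z * A) * X * A" unfolding G_def using d by (simp add: mult_assoc_dims)
    then show ?thesis unfolding AZA AXA .
  qed
  moreover have "G * A * G = G"
  proof -
    have "G * A * G = Z * (A * X * A) * Z * A * X" unfolding G_def using d by (simp add: mult_assoc_dims)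
    also have "\<dots> = Z * (A * Z * A) * X" unfolding AXA using d by (simp add: mult_assoc_dims)
    finally show ?thesis unfolding AZA G_def .
  qed
  moreover have "A * G = A * X"
  proof -
    have "A * G = (A * Z * A) * X" unfolding G_def using d by (simp add: mult_assoc_dims)
    then show ?thesis unfolding AZA .
  qed
  moreover have "G * A = Z * A"
  proof -
    have "G * A = Z * (A * X * A)" unfolding G_def using d by (simp add: mult_assoc_dims)
    then show ?thesis unfolding AXA .
  qed
  ultimately have "penrose A G" unfolding penrose_def using sX sZ d by simp
  then show ?thesis ..
qed

lemma penrose_unique:
  assumes X: "penrose A X" and Y: "penrose A Y"
  shows "X = Y"
proof -
  from X have Xc: "X \<in> carrier_mat (dim_col A) (dim_row A)" and AXA: "A * X * A = A"
    and XAX: "X * A * X = X" and sX: "(A * X)\<^sup>T = A * X" and sX2: "(X * A)\<^sup>T = X * A"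
    unfolding penrose_def by auto
  from Y have Yc: "Y \<in> carrier_mat (dim_col A) (dim_row A)" and AYA: "A * Y * A = A"
    and YAY: "Y * A * Y = Y" and sY: "(A * Y)\<^sup>T = A * Y" and sY2: "(Y * A)\<^sup>T = Y * A"
    unfolding penrose_def by auto
  have d: "dim_row X = dim_col A" "dim_col X = dim_row A" "dim_row Y = dim_col A" "dim_col Y = dim_row A"
    using Xc Yc by auto
  have "X = X * (A * X)\<^sup>T" using XAX sX d by (simp add: mult_assoc_dims)
  also have "\<dots> = X * (X\<^sup>T * (A * Y * A)\<^sup>T)" using AYA d by (simp add: transpose_mult_dims)
  also have "\<dots> = X * ((A * X)\<^sup>T * (A * Y)\<^sup>T)" using d by (simp add: transpose_mult_dims mult_assoc_dims)
  also have "\<dots> = X * (A * X) * (A * Y)" using sX sY d by (simp add: mult_assoc_dims)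
  also have "\<dots> = X * A * Y" using XAX d by (simp add: mult_assoc_dims)
  also have "\<dots> = (X * A) * (Y * A) * Y" using YAY d by (simp add: mult_assoc_dims)
  also have "\<dots> = (X * A)\<^sup>T * (Y * A)\<^sup>T * Y" using sX2 sY2 by simp
  also have "\<dots> = (A * X * A)\<^sup>T * Y\<^sup>T * Y" using d by (simp add: transpose_mult_dims mult_assoc_dims)
  also have "\<dots> = (Y * A)\<^sup>T * Y" using AXA d by (simp add: transpose_mult_dims)
  also have "\<dots> = Y" using YAY sY2 d by (simp add: mult_assoc_dims)
  finally show ?thesis .
qed

lemma penrose_pinv:
  assumes "A \<in> carrier_mat m n"
  shows "penrose A (pinv A)"
proof -
  have "\<exists>!G. penrose A G" using penrose_exists[OF assms] penrose_unique by blast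
  then show ?thesis unfolding pinv_def by (rule theI')
qed

section \<open>Range and null space projectors\<close>

lemma col_mem_range_mat:
  assumes A: "A \<in> carrier_mat m n" and j: "j < n"
  shows "col A j \<in> range_mat A"
proof -
  have "col A j = col (A * 1\<^sub>m n) j" using A by simp
  also have "\<dots> = A *\<^sub>v col (1\<^sub>m n) j" using A j by (intro col_mult2) auto
  also have "\<dots> = A *\<^sub>v unit_vec n j" using j by simp
  finally show ?thesis unfolding range_mat_def using A by auto
qed

lemma mult_eq_of_range_subset:
  fixes X U A :: "real mat"
  assumes X: "X \<in> carrier_mat m m" and U: "U \<in> carrier_mat m n" and A: "A \<in> carrier_mat m k"
    and XU: "X * U = U" and R: "range_mat A \<subseteq> range_mat U"
  shows "X * A = A"
proof (rule mat_col_eqI)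
  fix j assume "j < dim_col A" hence j: "j < k" using A by auto
  obtain y where y: "y \<in> carrier_vec n" and cy: "col A j = U *\<^sub>v y"
    using R col_mem_range_mat[OF A j] U unfolding range_mat_def by auto
  have "col (X * A) j = X *\<^sub>v (U *\<^sub>v y)" unfolding cy[symmetric] using X A j by (intro col_mult2) auto
  also have "\<dots> = (X * U) *\<^sub>v y" using X U y by (simp add: assoc_mult_mat_vec)
  finally show "col (X * A) j = col A j" unfolding XU cy .
qed (use X A in auto)

lemma mult_eq_zero_of_null_subset:
  fixes U A D :: "real mat"
  assumes U: "U \<in> carrier_mat m n" and A: "A \<in> carrier_mat m' n" and D: "D \<in> carrier_mat n k"
    and N: "null_mat U \<subseteq> null_mat A" and UD: "U * D = 0\<^sub>m m k"
  shows "A * D = 0\<^sub>m m' k"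
proof (rule mat_col_eqI)
  fix j assume "j < dim_col (0\<^sub>m m' k :: real mat)" hence j: "j < k" by auto
  have "U *\<^sub>v col D j = col (U * D) j" using U D j by (intro col_mult2[symmetric]) auto
  also have "\<dots> = 0\<^sub>v m" unfolding UD using j by auto
  finally have "col D j \<in> null_mat U" using U D j unfolding null_mat_def by auto
  then have "col D j \<in> null_mat A" using N by auto
  then have "A *\<^sub>v col D j = 0\<^sub>v m'" using A D j unfolding null_mat_def by auto
  moreover have "col (A * D) j = A *\<^sub>v col D j" using A D j by (intro col_mult2) auto
  ultimately show "col (A * D) j = col (0\<^sub>m m' k) j" using j by simp
qed (use A D in auto)

lemma symmetric_projections_eq:
  fixes P Q :: "real mat"
  assumes "P \<in> carrier_mat k k" "Q \<in> carrier_mat k k" "P\<^sup>T = P" "Q\<^sup>T = Q"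
    and "P * Q = Q" "Q * P = P"
  shows "P = Q"
proof -
  have "P = (Q * P)\<^sup>T" using assms by simp
  also have "\<dots> = P * Q" using assms(1-4) by (simp add: transpose_mult_dims)
  finally show ?thesis using assms(5) by simp
qed

lemma pinv_carrier: "A \<in> carrier_mat m n \<Longrightarrow> pinv A \<in> carrier_mat n m"
  using penrose_pinv unfolding penrose_def by blast

lemma mult_pinv_mult_eq_of_range_subset:
  fixes X Y :: "real mat"
  assumes X: "X \<in> carrier_mat m n" and Y: "Y \<in> carrier_mat m k" and R: "range_mat Y \<subseteq> range_mat X"
  shows "X * pinv X * Y = Y"
proof (rule mult_eq_of_range_subset[OF _ X Y _ R])
  show "X * pinv X \<in> carrier_mat m m" using X pinv_carrier[OF X] by auto
  show "X * pinv X * X = X" using penrose_pinv[OF X] unfolding penrose_def by auto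
qed

lemma mult_pinv_mult_eq_of_null_subset:
  fixes X Y :: "real mat"
  assumes X: "X \<in> carrier_mat m n" and Y: "Y \<in> carrier_mat k n" and N: "null_mat X \<subseteq> null_mat Y"
  shows "Y * (pinv X * X) = Y"
proof -
  define x where "x = pinv X"
  have xc: "x \<in> carrier_mat n m" unfolding x_def using pinv_carrier X by auto
  have XxX: "X * (x * X) = X"
    using penrose_pinv[OF X] X xc unfolding penrose_def x_def by (simp add: mult_assoc_dims)
  have "X * (x * X - 1\<^sub>m n) = X * (x * X) - X * 1\<^sub>m n"
    using X xc by (intro mult_minus_distrib_mat) auto
  also have "\<dots> = 0\<^sub>m m n" unfolding XxX using X by simp
  finally have "Y * (x * X - 1\<^sub>m n) = 0\<^sub>m k n"
    by (rule mult_eq_zero_of_null_subset[OF X Y _ N, rotated]) (use X xc in auto)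
  moreover have "Y * (x * X - 1\<^sub>m n) = Y * (x * X) - Y * 1\<^sub>m n"
    using X Y xc by (intro mult_minus_distrib_mat) auto
  ultimately have "Y * (x * X) - Y = 0\<^sub>m k n" using Y by simp
  then show ?thesis unfolding x_def[symmetric]
    by (rule eq_of_minus_mat_eq_zero[rotated 2]) (use X Y xc in auto)
qed

lemma mult_pinv_eq_of_range_eq:
  fixes A U :: "real mat"
  assumes A: "A \<in> carrier_mat m n" and U: "U \<in> carrier_mat m n" and R: "range_mat U = range_mat A"
  shows "U * pinv U = A * pinv A"
proof -
  define u a where "u = pinv U" and "a = pinv A"
  have uc: "u \<in> carrier_mat n m" and ac: "a \<in> carrier_mat n m"
    unfolding u_def a_def using pinv_carrier A U by auto
  have su: "(U * u)\<^sup>T = U * u" and sa: "(A * a)\<^sup>T = A * a"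
    using penrose_pinv[OF U] penrose_pinv[OF A] unfolding penrose_def u_def a_def by auto
  have "U * u * (A * a) = (U * u * A) * a" using U uc A ac by (simp add: mult_assoc_dims)
  also have "\<dots> = A * a" unfolding u_def using mult_pinv_mult_eq_of_range_subset[OF U A] R by simp
  finally have 1: "U * u * (A * a) = A * a" .
  have "A * a * (U * u) = (A * a * U) * u" using U uc A ac by (simp add: mult_assoc_dims)
  also have "\<dots> = U * u" unfolding a_def using mult_pinv_mult_eq_of_range_subset[OF A U] R by simp
  finally have 2: "A * a * (U * u) = U * u" .
  show ?thesis unfolding u_def[symmetric] a_def[symmetric]
    by (rule symmetric_projections_eq[OF _ _ su sa 1 2]) (use U uc A ac in auto)
qed

lemma pinv_mult_eq_of_null_eq:
  fixes A U :: "real mat"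
  assumes A: "A \<in> carrier_mat m n" and U: "U \<in> carrier_mat m n" and N: "null_mat U = null_mat A"
  shows "pinv U * U = pinv A * A"
proof -
  define u a where "u = pinv U" and "a = pinv A"
  have uc: "u \<in> carrier_mat n m" and ac: "a \<in> carrier_mat n m"
    unfolding u_def a_def using pinv_carrier A U by auto
  have su: "(u * U)\<^sup>T = u * U" and sa: "(a * A)\<^sup>T = a * A"
    using penrose_pinv[OF U] penrose_pinv[OF A] unfolding penrose_def u_def a_def by auto
  have "u * U * (a * A) = u * (U * (a * A))" using U uc A ac by (simp add: mult_assoc_dims)
  also have "\<dots> = u * U" unfolding a_def using mult_pinv_mult_eq_of_null_subset[OF A U] N by simp
  finally have uUaA: "u * U * (a * A) = u * U" .
  have "(u * U * (a * A))\<^sup>T = (a * A)\<^sup>T * (u * U)\<^sup>T"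
    using U uc A ac by (intro transpose_mult_dims) simp
  then have 1: "a * A * (u * U) = u * U" unfolding uUaA su sa by simp
  have "a * A * (u * U) = a * (A * (u * U))" using U uc A ac by (simp add: mult_assoc_dims)
  also have "\<dots> = a * A" unfolding u_def using mult_pinv_mult_eq_of_null_subset[OF U A] N by simp
  finally have aAuU: "a * A * (u * U) = a * A" .
  have "(a * A * (u * U))\<^sup>T = (u * U)\<^sup>T * (a * A)\<^sup>T"
    using U uc A ac by (intro transpose_mult_dims) simp
  then have 2: "u * U * (a * A) = a * A" unfolding aAuU su sa by simp
  show ?thesis unfolding u_def[symmetric] a_def[symmetric]
    by (rule symmetric_projections_eq[OF _ _ su sa 2 1]) (use U uc A ac in auto)
qed

section \<open>Nonnegative matrices and the spectral radius\<close>

lemma nonneg_mat_imp_le: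
  assumes "nonneg_mat X" "X \<in> carrier_mat n m"
  shows "0\<^sub>m n m \<le> X"
  using assms unfolding nonneg_mat_def less_eq_mat_def by auto

lemma mult_mat_nonneg:
  fixes X Y :: "real mat"
  assumes "0\<^sub>m n m \<le> X" "0\<^sub>m m k \<le> Y"
  shows "0\<^sub>m n k \<le> X * Y"
  using assms unfolding less_eq_mat_def by (auto simp: scalar_prod_def intro!: sum_nonneg)

lemma mult_mat_vec_mono:
  fixes X :: "real mat"
  assumes X: "0\<^sub>m n m \<le> X" and xy: "x \<le> y" and y: "y \<in> carrier_vec m"
  shows "X *\<^sub>v x \<le> X *\<^sub>v y"
  using assms unfolding less_eq_mat_def less_eq_vec_def
  by (auto simp: scalar_prod_def intro!: sum_mono mult_left_mono)

lemma mult_mat_vec_nonneg: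
  fixes X :: "real mat"
  assumes "0\<^sub>m n m \<le> X" "0\<^sub>v m \<le> x"
  shows "0\<^sub>v n \<le> X *\<^sub>v x"
  using assms unfolding less_eq_mat_def less_eq_vec_def
  by (auto simp: scalar_prod_def intro!: sum_nonneg)

lemma rho_eigenvector:
  assumes T: "T \<in> carrier_mat n n" and n: "n > 0"
  obtains l v where "v \<in> carrier_vec n" "v \<noteq> 0\<^sub>v n"
    "map_mat complex_of_real T *\<^sub>v v = l \<cdot>\<^sub>v v" "cmod l = rho T"
proof -
  have cT: "map_mat complex_of_real T \<in> carrier_mat n n" using T by auto
  from spectral_radius_mem_max(1)[OF cT n] obtain l where
    "l \<in> spectrum (map_mat complex_of_real T)" and "rho T = cmod l"
    unfolding rho_def by auto
  then show ?thesis using that cT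
    unfolding spectrum_def eigenvalue_def eigenvector_def by auto
qed

lemma norm_eigenvalue_le_rho:
  assumes T: "T \<in> carrier_mat n n" and v: "v \<in> carrier_vec n" "v \<noteq> 0\<^sub>v n"
    and ev: "map_mat complex_of_real T *\<^sub>v v = l \<cdot>\<^sub>v v"
  shows "cmod l \<le> rho T"
proof -
  have cT: "map_mat complex_of_real T \<in> carrier_mat n n" using T by auto
  have "n > 0" using v by (cases n) auto
  moreover have "cmod l \<in> norm ` spectrum (map_mat complex_of_real T)"
    using v ev cT unfolding spectrum_def eigenvalue_def eigenvector_def by auto
  ultimately show ?thesis
    using spectral_radius_mem_max(2)[OF cT] unfolding rho_def by blast
qed

lemma rho_nonneg:
  assumes "T \<in> carrier_mat n n" "n > 0"
  shows "0 \<le> rho T"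
  using rho_eigenvector[OF assms] by (metis norm_ge_zero)

lemma abs_eigenvector_le:
  fixes T :: "real mat"
  assumes T: "T \<in> carrier_mat n n" "0\<^sub>m n n \<le> T" and v: "v \<in> carrier_vec n"
    and ev: "map_mat complex_of_real T *\<^sub>v v = l \<cdot>\<^sub>v v"
  shows "cmod l \<cdot>\<^sub>v map_vec cmod v \<le> T *\<^sub>v map_vec cmod v"
  unfolding less_eq_vec_def
proof (intro conjI allI impI)
  show "dim_vec (cmod l \<cdot>\<^sub>v map_vec cmod v) = dim_vec (T *\<^sub>v map_vec cmod v)" using T v by simp
  fix i assume "i < dim_vec (T *\<^sub>v map_vec cmod v)"
  then have i: "i < n" using T by simp
  have "l * v $ i = (\<Sum>j = 0..<n. complex_of_real (T $$ (i,j)) * v $ j)"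
    using arg_cong[OF ev, of "\<lambda>w. w $ i"] T v i by (simp add: scalar_prod_def)
  then have "cmod l * cmod (v $ i) \<le> (\<Sum>j = 0..<n. cmod (complex_of_real (T $$ (i,j)) * v $ j))"
    by (metis norm_mult norm_sum)
  also have "\<dots> = (\<Sum>j = 0..<n. T $$ (i,j) * cmod (v $ j))"
    using T i unfolding less_eq_mat_def by (intro sum.cong) (auto simp: norm_mult)
  finally show "(cmod l \<cdot>\<^sub>v map_vec cmod v) $ i \<le> (T *\<^sub>v map_vec cmod v) $ i"
    using T v i by (simp add: scalar_prod_def)
qed

lemma abs_vec_nonzero:
  assumes "v \<in> carrier_vec n" "v \<noteq> 0\<^sub>v n"
  obtains i where "i < n" "0 < cmod (v $ i)"
proof -
  have "\<not> (\<forall>i<n. v $ i = 0)" using assms by (auto intro: eq_vecI)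
  then show ?thesis using that by auto
qed

lemma rho_le_of_subinvariant:
  fixes T :: "real mat"
  assumes T: "T \<in> carrier_mat n n" "0\<^sub>m n n \<le> T" and n: "n > 0"
    and x: "x \<in> carrier_vec n" and pos: "\<And>i. i < n \<Longrightarrow> 0 < x $ i"
    and Tx: "T *\<^sub>v x \<le> s \<cdot>\<^sub>v x"
  shows "rho T \<le> s"
proof -
  obtain l v where v: "v \<in> carrier_vec n" "v \<noteq> 0\<^sub>v n"
    and ev: "map_mat complex_of_real T *\<^sub>v v = l \<cdot>\<^sub>v v" and l: "cmod l = rho T"
    using rho_eigenvector[OF T(1) n] .
  define w where "w = map_vec cmod v"
  have wc: "w \<in> carrier_vec n" unfolding w_def using v by simp
  define t where "t = Max ((\<lambda>j. w $ j / x $ j) ` {0..<n})"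
  have "t \<in> (\<lambda>j. w $ j / x $ j) ` {0..<n}" unfolding t_def using n by (intro Max_in) auto
  then obtain i0 where i0: "i0 < n" and t: "t = w $ i0 / x $ i0" by auto
  have "w $ i \<le> t * x $ i" if i: "i < n" for i
  proof -
    have "w $ i / x $ i \<le> t" unfolding t_def using i by (intro Max_ge) auto
    then show ?thesis using pos[OF i] by (simp add: divide_le_eq)
  qed
  then have w_le: "w \<le> t \<cdot>\<^sub>v x" unfolding less_eq_vec_def using wc x by auto
  obtain j where j: "j < n" "0 < w $ j" using abs_vec_nonzero[OF v] v unfolding w_def by auto
  have "0 < w $ j / x $ j" using j pos by simp
  also have "\<dots> \<le> t" unfolding t_def using j by (intro Max_ge) auto
  finally have t_pos: "0 < t" .
  have w_i0: "w $ i0 = t * x $ i0" using t pos[OF i0] by simp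
  have "cmod l * w $ i0 \<le> (T *\<^sub>v w) $ i0"
    using abs_eigenvector_le[OF T v(1) ev] i0 T unfolding w_def less_eq_vec_def by auto
  also have "\<dots> \<le> (T *\<^sub>v (t \<cdot>\<^sub>v x)) $ i0"
    using mult_mat_vec_mono[OF T(2) w_le] x i0 T unfolding less_eq_vec_def by auto
  also have "\<dots> = t * (T *\<^sub>v x) $ i0" using T x i0 by (simp add: mult_mat_vec)
  also have "\<dots> \<le> t * (s * x $ i0)"
    using Tx i0 T t_pos unfolding less_eq_vec_def by auto
  also have "\<dots> = s * w $ i0" using w_i0 by simp
  finally show ?thesis using l w_i0 t_pos pos[OF i0] by simp
qed

lemma rho_smult_le:
  fixes T :: "real mat"
  assumes T: "T \<in> carrier_mat n n" and n: "n > 0" and c: "c > 0"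
  shows "rho (c \<cdot>\<^sub>m T) \<le> c * rho T"
proof -
  have cT: "c \<cdot>\<^sub>m T \<in> carrier_mat n n" using T by simp
  obtain l v where v: "v \<in> carrier_vec n" "v \<noteq> 0\<^sub>v n"
    and ev: "map_mat complex_of_real (c \<cdot>\<^sub>m T) *\<^sub>v v = l \<cdot>\<^sub>v v" and l: "cmod l = rho (c \<cdot>\<^sub>m T)"
    using rho_eigenvector[OF cT n] .
  have "map_mat complex_of_real T *\<^sub>v v = (l / complex_of_real c) \<cdot>\<^sub>v v"
  proof (rule eq_vecI)
    fix i assume "i < dim_vec ((l / complex_of_real c) \<cdot>\<^sub>v v)"
    then have i: "i < n" using v by simp
    have "l * v $ i = complex_of_real c * (map_mat complex_of_real T *\<^sub>v v) $ i"
      using arg_cong[OF ev, of "\<lambda>w. w $ i"] T v i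
      by (simp add: scalar_prod_def sum_distrib_left mult.assoc)
    then show "(map_mat complex_of_real T *\<^sub>v v) $ i = ((l / complex_of_real c) \<cdot>\<^sub>v v) $ i"
      using c i v by (simp add: field_simps)
  qed (use T v in auto)
  then have "cmod (l / complex_of_real c) \<le> rho T" by (rule norm_eigenvalue_le_rho[OF T v])
  then show ?thesis using l c by (simp add: norm_divide field_simps)
qed

lemma pow_mat_smult:
  fixes T :: "'a :: comm_ring_1 mat"
  assumes T: "T \<in> carrier_mat n n"
  shows "(c \<cdot>\<^sub>m T) ^\<^sub>m k = c ^ k \<cdot>\<^sub>m (T ^\<^sub>m k)"
proof (induction k)
  case 0
  then show ?case using T by (intro eq_matI) auto
next
  case (Suc k)
  have "(c \<cdot>\<^sub>m T) ^\<^sub>m Suc k = (c ^ k \<cdot>\<^sub>m T ^\<^sub>m k) * (c \<cdot>\<^sub>m T)" using Suc by simp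
  also have "\<dots> = c ^ Suc k \<cdot>\<^sub>m (T ^\<^sub>m k * T)"
    using T by (intro eq_matI) (auto simp: scalar_prod_def sum_distrib_left ac_simps)
  finally show ?case by simp
qed

lemma pow_mat_tendsto_zero:
  fixes T :: "real mat"
  assumes T: "T \<in> carrier_mat n n" and r: "rho T < 1" and ij: "i < n" "j < n"
  shows "(\<lambda>k. (T ^\<^sub>m k) $$ (i,j)) \<longlonglongrightarrow> 0"
proof -
  have n: "n > 0" using ij by simp
  define q where "q = (1 + rho T) / 2"
  have q: "0 < q" "q < 1" "rho T < q" unfolding q_def using r rho_nonneg[OF T n] by auto
  have "rho ((1 / q) \<cdot>\<^sub>m T) \<le> (1 / q) * rho T" using q by (intro rho_smult_le[OF T n]) auto
  also have "\<dots> < 1" using q by (simp add: field_simps)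
  finally have "spectral_radius (map_mat complex_of_real ((1 / q) \<cdot>\<^sub>m T)) < 1" unfolding rho_def .
  then obtain c where c: "\<And>k. norm_bound (map_mat complex_of_real ((1 / q) \<cdot>\<^sub>m T) ^\<^sub>m k) c"
    using spectral_radius_jnf_norm_bound_less_1_upper_triangular T by (metis map_carrier_mat smult_carrier_mat)
  have bound: "\<bar>(T ^\<^sub>m k) $$ (i,j)\<bar> \<le> q ^ k * c" for k
  proof -
    have Tk: "dim_row (T ^\<^sub>m k) = n" "dim_col (T ^\<^sub>m k) = n" using T by auto
    have "map_mat complex_of_real ((1 / q) \<cdot>\<^sub>m T) ^\<^sub>m k = map_mat complex_of_real (((1 / q) \<cdot>\<^sub>m T) ^\<^sub>m k)"
      by (rule of_real_hom.mat_hom_pow[symmetric, of _ n]) (use T in simp)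
    also have "\<dots> = map_mat complex_of_real ((1 / q) ^ k \<cdot>\<^sub>m T ^\<^sub>m k)" unfolding pow_mat_smult[OF T] ..
    finally have "norm_bound (map_mat complex_of_real ((1 / q) ^ k \<cdot>\<^sub>m T ^\<^sub>m k)) c" using c by metis
    then have "\<bar>(1 / q) ^ k * (T ^\<^sub>m k) $$ (i,j)\<bar> \<le> c"
      using Tk ij q unfolding norm_bound_def by (auto simp: norm_mult norm_power norm_divide abs_mult power_abs)
    then show ?thesis using q by (simp add: abs_mult power_one_over field_simps)
  qed
  have "(\<lambda>k. q ^ k) \<longlonglongrightarrow> 0" using q by (intro LIMSEQ_power_zero) simp
  moreover have "eventually (\<lambda>k. norm ((T ^\<^sub>m k) $$ (i,j)) \<le> norm (q ^ k) * c) sequentially"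
    using bound q by (intro always_eventually allI) simp
  ultimately show ?thesis by (rule tendsto_0_le)
qed

lemma pow_mat_mult_vec_tendsto_zero:
  fixes T :: "real mat"
  assumes T: "T \<in> carrier_mat n n" and r: "rho T < 1" and y: "y \<in> carrier_vec n" and j: "j < n"
  shows "(\<lambda>k. (T ^\<^sub>m k *\<^sub>v y) $ j) \<longlonglongrightarrow> 0"
proof -
  have "(\<lambda>k. \<Sum>l = 0..<n. (T ^\<^sub>m k) $$ (j,l) * y $ l) \<longlonglongrightarrow> 0"
    using pow_mat_tendsto_zero[OF T r j] by (intro tendsto_null_sum tendsto_mult_left_zero) auto
  moreover have "(T ^\<^sub>m k *\<^sub>v y) $ j = (\<Sum>l = 0..<n. (T ^\<^sub>m k) $$ (j,l) * y $ l)" for k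
    using T y j by (simp add: scalar_prod_def)
  ultimately show ?thesis by simp
qed

lemma mult_mat_vec_tendsto_zero:
  fixes X :: "real mat"
  assumes X: "X \<in> carrier_mat p n" and w: "\<And>k. w k \<in> carrier_vec n"
    and lim: "\<And>j. j < n \<Longrightarrow> (\<lambda>k. w k $ j) \<longlonglongrightarrow> 0" and i: "i < p"
  shows "(\<lambda>k. (X *\<^sub>v w k) $ i) \<longlonglongrightarrow> 0"
proof -
  have "(\<lambda>k. \<Sum>j = 0..<n. X $$ (i,j) * w k $ j) \<longlonglongrightarrow> 0"
    using lim by (intro tendsto_null_sum tendsto_mult_right_zero) auto
  moreover have "(X *\<^sub>v w k) $ i = (\<Sum>j = 0..<n. X $$ (i,j) * w k $ j)" for k
    using X w[of k] i by (simp add: scalar_prod_def)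
  ultimately show ?thesis by simp
qed

lemma eigenvector_mult_swap:
  fixes X Y :: "'a :: field mat"
  assumes X: "X \<in> carrier_mat n m" and Y: "Y \<in> carrier_mat m n"
    and v: "v \<in> carrier_vec n" "v \<noteq> 0\<^sub>v n" and ev: "(X * Y) *\<^sub>v v = l \<cdot>\<^sub>v v" and l: "l \<noteq> 0"
  shows "Y *\<^sub>v v \<noteq> 0\<^sub>v m" "(Y * X) *\<^sub>v (Y *\<^sub>v v) = l \<cdot>\<^sub>v (Y *\<^sub>v v)"
proof -
  have Xw: "X *\<^sub>v (Y *\<^sub>v v) = l \<cdot>\<^sub>v v" using ev X Y v by (simp add: assoc_mult_mat_vec)
  have "(Y * X) *\<^sub>v (Y *\<^sub>v v) = Y *\<^sub>v (X *\<^sub>v (Y *\<^sub>v v))" using X Y v by (simp add: assoc_mult_mat_vec)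
  also have "\<dots> = l \<cdot>\<^sub>v (Y *\<^sub>v v)" unfolding Xw using Y v(1) by (rule mult_mat_vec)
  finally show "(Y * X) *\<^sub>v (Y *\<^sub>v v) = l \<cdot>\<^sub>v (Y *\<^sub>v v)" .
  show "Y *\<^sub>v v \<noteq> 0\<^sub>v m"
  proof
    assume "Y *\<^sub>v v = 0\<^sub>v m"
    then have lv: "l \<cdot>\<^sub>v v = 0\<^sub>v n" unfolding Xw[symmetric] using X by (intro eq_vecI) (auto simp: scalar_prod_def)
    have "v = 0\<^sub>v n"
    proof (rule eq_vecI)
      fix i assume i: "i < dim_vec (0\<^sub>v n :: 'a vec)"
      then have "l * v $ i = 0" using arg_cong[OF lv, of "\<lambda>u. u $ i"] v by simp
      then show "v $ i = 0\<^sub>v n $ i" using l i by simp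
    qed (use v in simp)
    then show False using v by simp
  qed
qed

lemma rho_mult_le_rho_mult_swap:
  fixes X Y :: "real mat"
  assumes X: "X \<in> carrier_mat n m" and Y: "Y \<in> carrier_mat m n" and n: "n > 0" and m: "m > 0"
  shows "rho (X * Y) \<le> rho (Y * X)"
proof -
  have XY: "X * Y \<in> carrier_mat n n" and YX: "Y * X \<in> carrier_mat m m" using X Y by auto
  obtain l v where v: "v \<in> carrier_vec n" "v \<noteq> 0\<^sub>v n"
    and ev: "map_mat complex_of_real (X * Y) *\<^sub>v v = l \<cdot>\<^sub>v v" and l: "cmod l = rho (X * Y)"
    using rho_eigenvector[OF XY n] .
  have hom: "map_mat complex_of_real (X * Y) = map_mat complex_of_real X * map_mat complex_of_real Y"
    "map_mat complex_of_real (Y * X) = map_mat complex_of_real Y * map_mat complex_of_real X"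
    using X Y by (auto intro: of_real_hom.mat_hom_mult)
  show ?thesis
  proof (cases "l = 0")
    case True
    then show ?thesis using l rho_nonneg[OF YX m] by simp
  next
    case False
    note swap = eigenvector_mult_swap[of "map_mat complex_of_real X" n m "map_mat complex_of_real Y",
        OF _ _ v ev[unfolded hom] False, folded hom]
    have "cmod l \<le> rho (Y * X)"
      by (rule norm_eigenvalue_le_rho[OF YX _ swap]) (use X Y v in auto)
    then show ?thesis using l by simp
  qed
qed

section \<open>Subinvariant vectors from truncated Neumann series\<close>

lemma pow_mat_Suc_left:
  assumes B: "(B :: 'a :: semiring_1 mat) \<in> carrier_mat n n"
  shows "B ^\<^sub>m Suc k = B * B ^\<^sub>m k"
proof (induction k)
  case 0
  then show ?case using B by simp
next
  case (Suc k)
  have "B ^\<^sub>m Suc (Suc k) = B * B ^\<^sub>m k * B" using Suc by simp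
  also have "\<dots> = B * (B ^\<^sub>m k * B)" using B by (simp add: mult_assoc_dims)
  finally show ?case by simp
qed

primrec neumann_vec :: "'a :: semiring_1 mat \<Rightarrow> 'a vec \<Rightarrow> nat \<Rightarrow> 'a vec" where
  "neumann_vec B y 0 = y"
| "neumann_vec B y (Suc k) = y + B *\<^sub>v neumann_vec B y k"

lemma neumann_vec_carrier:
  "B \<in> carrier_mat n n \<Longrightarrow> y \<in> carrier_vec n \<Longrightarrow> neumann_vec B y k \<in> carrier_vec n"
  by (induction k) auto

lemma neumann_vec_nonneg:
  fixes B :: "real mat"
  assumes B: "B \<in> carrier_mat n n" "0\<^sub>m n n \<le> B" and y: "0\<^sub>v n \<le> y"
  shows "0\<^sub>v n \<le> neumann_vec B y k"
proof (induction k)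
  case 0
  then show ?case using y by simp
next
  case (Suc k)
  then have "0\<^sub>v n \<le> B *\<^sub>v neumann_vec B y k" by (rule mult_mat_vec_nonneg[OF B(2)])
  then show ?case using y B unfolding less_eq_vec_def by auto
qed

lemma neumann_vec_telescope:
  fixes B :: "'a :: comm_ring_1 mat"
  assumes B: "B \<in> carrier_mat n n" and y: "y \<in> carrier_vec n"
  shows "neumann_vec B y k + B ^\<^sub>m Suc k *\<^sub>v y = y + B *\<^sub>v neumann_vec B y k"
proof (induction k)
  case 0
  then show ?case using B y by simp
next
  case (Suc k)
  let ?S = "neumann_vec B y k"
  have S: "?S \<in> carrier_vec n" using neumann_vec_carrier[OF B y] .
  have P: "B ^\<^sub>m Suc k *\<^sub>v y \<in> carrier_vec n" by (rule mult_mat_vec_carrier[OF pow_carrier_mat[OF B] y])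
  have "neumann_vec B y (Suc k) + B ^\<^sub>m Suc (Suc k) *\<^sub>v y
      = (y + B *\<^sub>v ?S) + B *\<^sub>v (B ^\<^sub>m Suc k *\<^sub>v y)"
    unfolding pow_mat_Suc_left[OF B, of "Suc k"] assoc_mult_mat_vec[OF B pow_carrier_mat[OF B] y] by simp
  also have "\<dots> = y + (B *\<^sub>v ?S + B *\<^sub>v (B ^\<^sub>m Suc k *\<^sub>v y))"
    by (rule assoc_add_vec[OF y mult_mat_vec_carrier[OF B S] mult_mat_vec_carrier[OF B P]])
  also have "\<dots> = y + B *\<^sub>v (?S + B ^\<^sub>m Suc k *\<^sub>v y)"
    using mult_add_distrib_mat_vec[OF B S P] by simp
  also have "\<dots> = y + B *\<^sub>v neumann_vec B y (Suc k)" unfolding Suc by simp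
  finally show ?case .
qed

lemma mult_mat_vec_ones:
  "(A :: real mat) \<in> carrier_mat n m \<Longrightarrow> i < n \<Longrightarrow> (A *\<^sub>v vec m (\<lambda>_. 1)) $ i = (\<Sum>j<m. A $$ (i,j))"
  by (simp add: scalar_prod_def lessThan_atLeast0)

lemma eventually_neumann_residual_lt:
  fixes B P :: "real mat"
  assumes B: "B \<in> carrier_mat m m" "rho B < 1" and P: "P \<in> carrier_mat p m" "pos_row_sums P"
  shows "\<forall>\<^sub>F k in sequentially. \<forall>i\<in>{..<p}.
    (P *\<^sub>v (B ^\<^sub>m k *\<^sub>v vec m (\<lambda>_. 1))) $ i < (P *\<^sub>v vec m (\<lambda>_. 1)) $ i"
proof (intro eventually_ball_finite ballI)
  fix i assume "i \<in> {..<p}"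
  then have i: "i < p" by simp
  let ?e = "vec m (\<lambda>_. 1) :: real vec"
  have "(\<lambda>k. (P *\<^sub>v (B ^\<^sub>m k *\<^sub>v ?e)) $ i) \<longlonglongrightarrow> 0"
    by (intro mult_mat_vec_tendsto_zero[OF P(1) _ pow_mat_mult_vec_tendsto_zero[OF B] i]
        mult_mat_vec_carrier[OF pow_carrier_mat[OF B(1)]]) auto
  moreover have "0 < (P *\<^sub>v ?e) $ i"
    unfolding mult_mat_vec_ones[OF P(1) i] using P i unfolding pos_row_sums_def by auto
  ultimately show "\<forall>\<^sub>F k in sequentially. (P *\<^sub>v (B ^\<^sub>m k *\<^sub>v ?e)) $ i < (P *\<^sub>v ?e) $ i"
    by (rule order_tendstoD(2))
qed simp

lemma mult_neumann_vec_bounds: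
  fixes B P :: "real mat"
  assumes B: "B \<in> carrier_mat m m" "0\<^sub>m m m \<le> B" and e: "e \<in> carrier_vec m" "0\<^sub>v m \<le> e"
    and P: "P \<in> carrier_mat k m" "0\<^sub>m k m \<le> P" and i: "i < k"
    and small: "(P *\<^sub>v (B ^\<^sub>m Suc K *\<^sub>v e)) $ i < (P *\<^sub>v e) $ i"
  shows "0 < (P *\<^sub>v neumann_vec B e K) $ i"
    "(P *\<^sub>v (B *\<^sub>v neumann_vec B e K)) $ i < (P *\<^sub>v neumann_vec B e K) $ i"
proof -
  let ?h = "neumann_vec B e K" and ?r = "B ^\<^sub>m Suc K *\<^sub>v e"
  have h: "?h \<in> carrier_vec m" "0\<^sub>v m \<le> ?h"
    using neumann_vec_carrier[OF B(1) e(1)] neumann_vec_nonneg[OF B e(2)] by auto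
  have r: "?r \<in> carrier_vec m" by (rule mult_mat_vec_carrier[OF pow_carrier_mat[OF B(1)] e(1)])
  have Bh: "B *\<^sub>v ?h \<in> carrier_vec m" using B h by simp
  have "P *\<^sub>v ?h + P *\<^sub>v ?r = P *\<^sub>v e + P *\<^sub>v (B *\<^sub>v ?h)"
    using neumann_vec_telescope[OF B(1) e(1)] mult_add_distrib_mat_vec[OF P(1) h(1) r]
      mult_add_distrib_mat_vec[OF P(1) e(1) Bh] by simp
  from arg_cong[OF this, of "\<lambda>v. v $ i"]
  have "(P *\<^sub>v ?h) $ i + (P *\<^sub>v ?r) $ i = (P *\<^sub>v e) $ i + (P *\<^sub>v (B *\<^sub>v ?h)) $ i"
    using P i h r e Bh by simp
  moreover have "0 \<le> (P *\<^sub>v (B *\<^sub>v ?h)) $ i"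
    using mult_mat_vec_nonneg[OF P(2) mult_mat_vec_nonneg[OF B(2) h(2)]] i
    unfolding less_eq_vec_def by auto
  ultimately show "0 < (P *\<^sub>v ?h) $ i" "(P *\<^sub>v (B *\<^sub>v ?h)) $ i < (P *\<^sub>v ?h) $ i"
    using small by linarith+
qed

text \<open>A truncated Neumann series \<open>h = \<Sum>\<^bsub>k\<le>K\<^esub> (C/s)\<^sup>k e\<close> satisfies \<open>C h = s h - s e + s r\<close> with a
  nonnegative residual \<open>r\<close> that is small for large \<open>K\<close>; seen through \<open>X\<close> and \<open>Z\<close>,
  whose rows sum to positive numbers, the term \<open>s e\<close> dominates \<open>s r\<close>.\<close>

lemma exists_subinvariant_vector:
  fixes C X Z :: "real mat"
  assumes C: "C \<in> carrier_mat m m" "0\<^sub>m m m \<le> C" "rho C < s" and m: "m > 0"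
    and X: "X \<in> carrier_mat p m" "0\<^sub>m p m \<le> X" "pos_row_sums X"
    and Z: "Z \<in> carrier_mat q m" "0\<^sub>m q m \<le> Z" "pos_row_sums Z"
  obtains h where "h \<in> carrier_vec m" "0\<^sub>v m \<le> h" "\<And>i. i < p \<Longrightarrow> 0 < (X *\<^sub>v h) $ i"
    "X *\<^sub>v (C *\<^sub>v h) \<le> s \<cdot>\<^sub>v (X *\<^sub>v h)" "Z *\<^sub>v (C *\<^sub>v h) \<le> s \<cdot>\<^sub>v (Z *\<^sub>v h)"
proof -
  have s0: "0 < s" using C rho_nonneg[OF C(1) m] by simp
  define B where "B = (1 / s) \<cdot>\<^sub>m C"
  have B: "B \<in> carrier_mat m m" "0\<^sub>m m m \<le> B"
    unfolding B_def using C s0 unfolding less_eq_mat_def by auto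
  have "rho B \<le> (1 / s) * rho C" unfolding B_def using C s0 m by (intro rho_smult_le) auto
  also have "\<dots> < 1" using C s0 by (simp add: field_simps)
  finally have rB: "rho B < 1" .
  define e :: "real vec" where "e = vec m (\<lambda>_. 1)"
  have e: "e \<in> carrier_vec m" "0\<^sub>v m \<le> e" unfolding e_def less_eq_vec_def by auto
  obtain K where K: "\<forall>i<p. (X *\<^sub>v (B ^\<^sub>m Suc K *\<^sub>v e)) $ i < (X *\<^sub>v e) $ i"
    "\<forall>i<q. (Z *\<^sub>v (B ^\<^sub>m Suc K *\<^sub>v e)) $ i < (Z *\<^sub>v e) $ i"
    using eventually_conj[OF eventually_neumann_residual_lt[OF B(1) rB X(1,3)]
        eventually_neumann_residual_lt[OF B(1) rB Z(1,3)]]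
    unfolding eventually_sequentially e_def by (metis lessThan_iff le_Suc_eq le_refl)
  define h where "h = neumann_vec B e K"
  have h: "h \<in> carrier_vec m" "0\<^sub>v m \<le> h"
    unfolding h_def using neumann_vec_carrier[OF B(1) e(1)] neumann_vec_nonneg[OF B e(2)] by auto
  have Ch: "C *\<^sub>v h = s \<cdot>\<^sub>v (B *\<^sub>v h)"
    unfolding B_def using C h s0 by (intro eq_vecI) (auto simp: scalar_prod_def sum_distrib_left)
  have through: "(P *\<^sub>v (C *\<^sub>v h)) $ i \<le> s * (P *\<^sub>v h) $ i"
    if P: "P \<in> carrier_mat k m" "0\<^sub>m k m \<le> P" and i: "i < k"
      and small: "(P *\<^sub>v (B ^\<^sub>m Suc K *\<^sub>v e)) $ i < (P *\<^sub>v e) $ i" for P k i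
  proof -
    have "(P *\<^sub>v (C *\<^sub>v h)) $ i = s * (P *\<^sub>v (B *\<^sub>v h)) $ i"
      unfolding Ch using P B h i by (simp add: mult_mat_vec)
    moreover have "(P *\<^sub>v (B *\<^sub>v h)) $ i \<le> (P *\<^sub>v h) $ i"
      using mult_neumann_vec_bounds(2)[OF B e P i small, folded h_def] by simp
    ultimately show ?thesis using s0 by (simp add: mult_left_mono)
  qed
  show ?thesis
  proof
    show "0 < (X *\<^sub>v h) $ i" if "i < p" for i
      unfolding h_def using mult_neumann_vec_bounds(1)[OF B e X(1,2) that] K(1) that by simp
    show "X *\<^sub>v (C *\<^sub>v h) \<le> s \<cdot>\<^sub>v (X *\<^sub>v h)"
      using through[OF X(1,2)] K(1) X C h unfolding less_eq_vec_def by auto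
    show "Z *\<^sub>v (C *\<^sub>v h) \<le> s \<cdot>\<^sub>v (Z *\<^sub>v h)"
      using through[OF Z(1,2)] K(2) Z C h unfolding less_eq_vec_def by auto
  qed (use h in auto)
qed

lemma comparison_identity_mult_vec:
  fixes X Y Z W :: "real mat"
  assumes X: "X \<in> carrier_mat n m" and Y: "Y \<in> carrier_mat m n" and Z: "Z \<in> carrier_mat n m"
    and W: "W \<in> carrier_mat m n" and identity: "Z * W * X = X - Z + Z * Y * X"
    and h: "h \<in> carrier_vec m"
  shows "(Z * W) *\<^sub>v (X *\<^sub>v h) = X *\<^sub>v h - Z *\<^sub>v h + Z *\<^sub>v ((Y * X) *\<^sub>v h)"
proof -
  have "(Z * W) *\<^sub>v (X *\<^sub>v h) = (Z * W * X) *\<^sub>v h"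
    using X Z W h by (intro assoc_mult_mat_vec[symmetric]) auto
  also have "\<dots> = (X - Z + Z * (Y * X)) *\<^sub>v h"
    unfolding identity using X Y Z by (simp add: mult_assoc_dims)
  also have "\<dots> = (X - Z) *\<^sub>v h + (Z * (Y * X)) *\<^sub>v h"
    using X Y Z h by (subst add_mult_distrib_mat_vec[of _ n m]) auto
  also have "\<dots> = X *\<^sub>v h - Z *\<^sub>v h + Z *\<^sub>v ((Y * X) *\<^sub>v h)"
    using X Y Z h by (simp add: minus_mult_distrib_mat_vec assoc_mult_mat_vec[of _ n m _ m])
  finally show ?thesis .
qed

lemma rho_mult_le_of_comparison_identity:
  fixes X Y Z W :: "real mat"
  assumes X: "X \<in> carrier_mat n m" "0\<^sub>m n m \<le> X" "pos_row_sums X"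
    and Y: "Y \<in> carrier_mat m n" "0\<^sub>m m n \<le> Y"
    and Z: "Z \<in> carrier_mat n m" "0\<^sub>m n m \<le> Z" "pos_row_sums Z"
    and W: "W \<in> carrier_mat m n" "0\<^sub>m m n \<le> W"
    and identity: "Z * W * X = X - Z + Z * Y * X"
    and n: "n > 0" and m: "m > 0" and r: "rho (X * Y) < 1"
  shows "rho (X * Y * Z * W) \<le> rho (X * Y)"
proof (rule dense_ge_bounded[OF r])
  fix s assume s: "rho (X * Y) < s" "s < 1"
  define C where "C = Y * X"
  have C: "C \<in> carrier_mat m m" "0\<^sub>m m m \<le> C" "rho C < s"
    unfolding C_def using X Y s rho_mult_le_rho_mult_swap[OF Y(1) X(1) m n]
    by (auto intro: mult_mat_nonneg)
  obtain h where h: "h \<in> carrier_vec m" "0\<^sub>v m \<le> h" and pos: "\<And>i. i < n \<Longrightarrow> 0 < (X *\<^sub>v h) $ i"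
    and Xh: "X *\<^sub>v (C *\<^sub>v h) \<le> s \<cdot>\<^sub>v (X *\<^sub>v h)" and Zh: "Z *\<^sub>v (C *\<^sub>v h) \<le> s \<cdot>\<^sub>v (Z *\<^sub>v h)"
    using exists_subinvariant_vector[OF C m X Z] by blast
  define x where "x = X *\<^sub>v h"
  have xc: "x \<in> carrier_vec n" unfolding x_def using X h by simp
  have T1x: "(X * Y) *\<^sub>v x \<le> s \<cdot>\<^sub>v x"
    using Xh X Y h unfolding x_def C_def by (simp add: assoc_mult_mat_vec[of _ n m _ n])
  have T2x: "(Z * W) *\<^sub>v x = x - Z *\<^sub>v h + Z *\<^sub>v (C *\<^sub>v h)"
    unfolding x_def C_def by (rule comparison_identity_mult_vec[OF X(1) Y(1) Z(1) W(1) identity h(1)])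
  have T2_le: "(Z * W) *\<^sub>v x \<le> x"
    unfolding less_eq_vec_def
  proof (intro conjI allI impI)
    show "dim_vec ((Z * W) *\<^sub>v x) = dim_vec x" using Z W xc by simp
    fix i assume "i < dim_vec x"
    then have i: "i < n" using xc by simp
    have "(Z *\<^sub>v (C *\<^sub>v h)) $ i \<le> s * (Z *\<^sub>v h) $ i" using Zh Z i unfolding less_eq_vec_def by auto
    also have "\<dots> \<le> (Z *\<^sub>v h) $ i"
      using mult_mat_vec_nonneg[OF Z(2) h(2)] i s C(3) rho_nonneg[OF C(1) m]
      unfolding less_eq_vec_def by (intro mult_left_le_one_le) auto
    finally show "((Z * W) *\<^sub>v x) $ i \<le> x $ i" unfolding T2x using i xc Z C h by simp
  qed
  have "X * Y * Z * W = (X * Y) * (Z * W)" using X Y Z W by (simp add: mult_assoc_dims)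
  then have "(X * Y * Z * W) *\<^sub>v x = (X * Y) *\<^sub>v ((Z * W) *\<^sub>v x)"
    using X Y Z W xc by (simp add: assoc_mult_mat_vec[of _ n n _ n])
  also have "\<dots> \<le> (X * Y) *\<^sub>v x" by (rule mult_mat_vec_mono[OF mult_mat_nonneg[OF X(2) Y(2)] T2_le xc])
  also have "\<dots> \<le> s \<cdot>\<^sub>v x" by (rule T1x)
  finally have Hx: "(X * Y * Z * W) *\<^sub>v x \<le> s \<cdot>\<^sub>v x" .
  have x_pos: "0 < x $ i" if "i < n" for i unfolding x_def by (rule pos[OF that])
  show "rho (X * Y * Z * W) \<le> s"
    by (rule rho_le_of_subinvariant[OF _ mult_mat_nonneg[OF mult_mat_nonneg[OF mult_mat_nonneg[OF X(2) Y(2)] Z(2)] W(2)]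
          n xc x_pos Hx]) (use X Y Z W in \<open>blast intro: mult_carrier_mat\<close>)
qed

section \<open>Proper splittings\<close>

lemma proper_splittingD:
  assumes "A \<in> carrier_mat m n" "proper_splitting A U V"
  shows "U \<in> carrier_mat m n" "V \<in> carrier_mat m n" "A = U - V"
    "range_mat U = range_mat A" "null_mat U = null_mat A"
  using assms unfolding proper_splitting_def by auto

lemma proper_splitting_pinv_identity:
  fixes A M N U V :: "real mat"
  assumes A: "A \<in> carrier_mat m n" and MN: "proper_splitting A M N" and UV: "proper_splitting A U V"
  shows "pinv M * N * pinv U = pinv U - pinv M + pinv M * V * pinv U"
proof -
  note M = proper_splittingD[OF A MN] and U = proper_splittingD[OF A UV]
  define g u where "g = pinv M" and "u = pinv U"
  have g: "g \<in> carrier_mat n m" and u: "u \<in> carrier_mat n m"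
    unfolding g_def u_def by (simp_all add: pinv_carrier M(1) U(1))
  have range: "M * g = U * u"
    unfolding g_def u_def mult_pinv_eq_of_range_eq[OF A M(1,4)] mult_pinv_eq_of_range_eq[OF A U(1,4)] ..
  have null: "g * M = u * U"
    unfolding g_def u_def pinv_mult_eq_of_null_eq[OF A M(1,5)] pinv_mult_eq_of_null_eq[OF A U(1,5)] ..
  have gMu: "g * M * u = u" unfolding null using penrose_pinv[OF U(1)] unfolding penrose_def u_def by simp
  have "g * U * u = g * (U * u)" using g U(1) u by (simp add: mult_assoc_dims)
  also have "\<dots> = g * (M * g)" unfolding range ..
  also have "\<dots> = g" using penrose_pinv[OF M(1)] g M(1) unfolding penrose_def g_def by (simp add: mult_assoc_dims)
  finally have gUu: "g * U * u = g" .
  define P Q where "P = g * N * u" and "Q = g * V * u"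
  have PQ: "P \<in> carrier_mat n m" "Q \<in> carrier_mat n m" unfolding P_def Q_def using g u M U by auto
  have "g * A * u = g * M * u - P" unfolding P_def M(3) using g u M(1,2)
    by (simp add: mult_minus_distrib_mat[of g n m] minus_mult_distrib_mat[of _ n n _ _ m])
  moreover have "g * A * u = g * U * u - Q" unfolding Q_def U(3) using g u U(1,2)
    by (simp add: mult_minus_distrib_mat[of g n m] minus_mult_distrib_mat[of _ n n _ _ m])
  ultimately have uPgQ: "u - P = g - Q" unfolding gMu gUu by simp
  have "P = u - g + Q"
  proof (rule eq_matI)
    fix i j assume "i < dim_row (u - g + Q)" "j < dim_col (u - g + Q)"
    then have ij: "i < n" "j < m" using PQ by auto
    have "(u - P) $$ (i,j) = (g - Q) $$ (i,j)" unfolding uPgQ ..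
    moreover have "(u - P) $$ (i,j) = u $$ (i,j) - P $$ (i,j)" "(g - Q) $$ (i,j) = g $$ (i,j) - Q $$ (i,j)"
      "(u - g + Q) $$ (i,j) = u $$ (i,j) - g $$ (i,j) + Q $$ (i,j)"
      using ij PQ g u by auto
    ultimately show "P $$ (i,j) = (u - g + Q) $$ (i,j)" by linarith
  qed (use PQ g u in auto)
  then show ?thesis unfolding P_def Q_def g_def u_def .
qed

lemma splitting_identity_mult_vec:
  fixes X Y Z :: "real mat"
  assumes X: "X \<in> carrier_mat n m" and Y: "Y \<in> carrier_mat m n" and Z: "Z \<in> carrier_mat n m"
    and identity: "X - Z + Z * Y * X = 0\<^sub>m n m" and w: "w \<in> carrier_vec n"
  shows "(Z * Y) *\<^sub>v w = (X * Y) *\<^sub>v w + (Z * Y) *\<^sub>v ((X * Y) *\<^sub>v w)"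
proof (rule eq_vecI)
  fix i assume "i < dim_vec ((X * Y) *\<^sub>v w + (Z * Y) *\<^sub>v ((X * Y) *\<^sub>v w))"
  then have i: "i < n" using Z by simp
  define y where "y = Y *\<^sub>v w"
  have yc: "y \<in> carrier_vec m" unfolding y_def using Y w by simp
  have "(X - Z + Z * Y * X) *\<^sub>v y = (X - Z) *\<^sub>v y + (Z * Y * X) *\<^sub>v y"
    using X Y Z yc by (subst add_mult_distrib_mat_vec[of _ n m]) auto
  also have "\<dots> = X *\<^sub>v y - Z *\<^sub>v y + (Z * Y * X) *\<^sub>v y"
    using X Z yc by (simp add: minus_mult_distrib_mat_vec)
  finally have "(X *\<^sub>v y) $ i - (Z *\<^sub>v y) $ i + ((Z * Y * X) *\<^sub>v y) $ i = 0"
    using arg_cong[OF identity, of "\<lambda>M. (M *\<^sub>v y) $ i"] i X Y Z yc by simp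
  moreover have "((Z * Y) *\<^sub>v ((X * Y) *\<^sub>v w)) $ i = ((Z * Y * X) *\<^sub>v y) $ i"
    unfolding y_def using X Y Z w by (simp add: assoc_mult_mat_vec[of _ n m _ m])
  ultimately show "((Z * Y) *\<^sub>v w) $ i = ((X * Y) *\<^sub>v w + (Z * Y) *\<^sub>v ((X * Y) *\<^sub>v w)) $ i"
    unfolding y_def using X Y Z w i by (simp add: assoc_mult_mat_vec[of _ n m _ n])
qed (use X Y Z in simp)

text \<open>With \<open>T = X Y\<close> and \<open>G = Z Y\<close> the identity reads \<open>G = T + G T\<close>; for \<open>G \<ge> 0\<close> a nonzero
  \<open>w \<ge> 0\<close> with \<open>w \<le> T w\<close> would give \<open>T w \<le> 0\<close>.\<close>

lemma rho_lt_1_of_splitting_identity: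
  fixes X Y Z :: "real mat"
  assumes X: "X \<in> carrier_mat n m" "0\<^sub>m n m \<le> X" and Y: "Y \<in> carrier_mat m n" "0\<^sub>m m n \<le> Y"
    and Z: "Z \<in> carrier_mat n m" "0\<^sub>m n m \<le> Z" and n: "n > 0"
    and identity: "X - Z + Z * Y * X = 0\<^sub>m n m"
  shows "rho (X * Y) < 1"
proof (rule ccontr)
  assume "\<not> rho (X * Y) < 1"
  have T: "X * Y \<in> carrier_mat n n" "0\<^sub>m n n \<le> X * Y" using X Y mult_mat_nonneg by auto
  obtain l v where v: "v \<in> carrier_vec n" "v \<noteq> 0\<^sub>v n"
    and ev: "map_mat complex_of_real (X * Y) *\<^sub>v v = l \<cdot>\<^sub>v v" and l: "cmod l = rho (X * Y)"
    using rho_eigenvector[OF T(1) n] .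
  define w where "w = map_vec cmod v"
  have wc: "w \<in> carrier_vec n" unfolding w_def using v by simp
  have l1: "1 \<le> cmod l" using l \<open>\<not> rho (X * Y) < 1\<close> by simp
  have "w $ i \<le> cmod l * w $ i" if "i < n" for i
    using mult_right_mono[OF l1, of "w $ i"] that v unfolding w_def by simp
  then have "w \<le> cmod l \<cdot>\<^sub>v w" unfolding less_eq_vec_def using wc by simp
  also have "\<dots> \<le> (X * Y) *\<^sub>v w" unfolding w_def by (rule abs_eigenvector_le[OF T v(1) ev])
  finally have w_le: "w \<le> (X * Y) *\<^sub>v w" .
  have "(Z * Y) *\<^sub>v w \<le> (Z * Y) *\<^sub>v ((X * Y) *\<^sub>v w)"
    using mult_mat_vec_mono[OF mult_mat_nonneg[OF Z(2) Y(2)] w_le] T wc by simp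
  then have Tw_nonpos: "((X * Y) *\<^sub>v w) $ i \<le> 0" if "i < n" for i
    unfolding splitting_identity_mult_vec[OF X(1) Y(1) Z(1) identity wc]
    using that X Y Z wc unfolding less_eq_vec_def by auto
  obtain i where i: "i < n" "0 < cmod (v $ i)" using abs_vec_nonzero[OF v] .
  have "w $ i \<le> ((X * Y) *\<^sub>v w) $ i" using w_le i T unfolding less_eq_vec_def by auto
  also have "\<dots> \<le> 0" using Tw_nonpos i by auto
  finally show False using i v unfolding w_def by simp
qed

lemma proper_splitting_self: "A \<in> carrier_mat m n \<Longrightarrow> proper_splitting A A (0\<^sub>m m n)"
  unfolding proper_splitting_def by (auto intro!: eq_matI)

lemma proper_regular_splittingD:
  assumes "A \<in> carrier_mat m n" "proper_regular_splitting A U V"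
  shows "proper_splitting A U V" "pinv U \<in> carrier_mat n m" "0\<^sub>m n m \<le> pinv U"
    "V \<in> carrier_mat m n" "0\<^sub>m m n \<le> V"
  using assms proper_splittingD[OF assms(1)] pinv_carrier nonneg_mat_imp_le
  unfolding proper_regular_splitting_def by auto

lemma semi_monotone_dims_pos:
  assumes "A \<in> carrier_mat m n" "semi_monotone A"
  shows "0 < n" "0 < m"
  using assms pinv_carrier[OF assms(1)] unfolding semi_monotone_def nonneg_mat_def by auto

lemma rho_pinv_mult_lt_1:
  assumes A: "A \<in> carrier_mat m n" "semi_monotone A" and UV: "proper_regular_splitting A U V"
  shows "rho (pinv U * V) < 1"
proof -
  note U = proper_regular_splittingD[OF A(1) UV]
  have a: "pinv A \<in> carrier_mat n m" "0\<^sub>m n m \<le> pinv A"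
    using A pinv_carrier nonneg_mat_imp_le unfolding semi_monotone_def by auto
  have "pinv A * 0\<^sub>m m n * pinv U = pinv U - pinv A + pinv A * V * pinv U"
    by (rule proper_splitting_pinv_identity[OF A(1) proper_splitting_self[OF A(1)] U(1)])
  then have "pinv U - pinv A + pinv A * V * pinv U = 0\<^sub>m n m" using a U by simp
  then show ?thesis
    by (rule rho_lt_1_of_splitting_identity[OF U(2-5) a semi_monotone_dims_pos(1)[OF A]])
qed

lemma rho_pinv_mult_le:
  assumes A: "A \<in> carrier_mat m n" "semi_monotone A"
    and MN: "proper_regular_splitting A M N" and UV: "proper_regular_splitting A U V"
    and "pos_row_sums (pinv U)" "pos_row_sums (pinv M)"
  shows "rho (pinv U * V * pinv M * N) \<le> rho (pinv U * V)"
proof -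
  note M = proper_regular_splittingD[OF A(1) MN] and U = proper_regular_splittingD[OF A(1) UV]
  have "pinv M * N * pinv U = pinv U - pinv M + pinv M * V * pinv U"
    by (rule proper_splitting_pinv_identity[OF A(1) M(1) U(1)])
  then show ?thesis
    by (rule rho_mult_le_of_comparison_identity[OF U(2,3) assms(5) U(4,5) M(2,3) assms(6) M(4,5) _
          semi_monotone_dims_pos[OF A] rho_pinv_mult_lt_1[OF A UV]])
qed

theorem theorem4p9:
  fixes A M N U V :: "real mat" and m n :: nat
  assumes "A \<in> carrier_mat m n"
    and "semi_monotone A"
    and "proper_regular_splitting A M N"
    and "proper_regular_splitting A U V"
    and "range_mat (M + U - A) = range_mat A"
    and "null_mat (M + U - A) = null_mat A"
    and "pos_row_sums (pinv U)"
    and "pos_row_sums (pinv M)"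
  shows "rho (pinv U * V * pinv M * N) \<le> min (rho (pinv U * V)) (rho (pinv M * N))
         \<and> min (rho (pinv U * V)) (rho (pinv M * N)) < 1"
proof -
  note U = proper_regular_splittingD[OF assms(1,4)] and M = proper_regular_splittingD[OF assms(1,3)]
  have "rho (pinv U * V * pinv M * N) \<le> rho (pinv U * V)"
    by (rule rho_pinv_mult_le[OF assms(1-4,7,8)])
  moreover have "rho (pinv M * N * pinv U * V) \<le> rho (pinv M * N)"
    by (rule rho_pinv_mult_le[OF assms(1,2,4,3,8,7)])
  moreover have "rho ((pinv U * V) * (pinv M * N)) \<le> rho ((pinv M * N) * (pinv U * V))"
    using U M semi_monotone_dims_pos[OF assms(1,2)] by (intro rho_mult_le_rho_mult_swap) auto
  then have "rho (pinv U * V * pinv M * N) \<le> rho (pinv M * N * pinv U * V)"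
    using U M by (simp add: mult_assoc_dims)
  moreover have "rho (pinv U * V) < 1" by (rule rho_pinv_mult_lt_1[OF assms(1,2,4)])
  ultimately show ?thesis by linarith
qed

end
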